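(* Let $N\ge3$ and suppose the settings $X_j,X_j'$ ($j=1,\dots,N$) satisfy (ND) and $\langle I^N_{CHSH}\rangle=\pm2\sqrt2$. Then the Bloch vectors $\vec n_j,\vec n_j'$ for $j=1,\dots,N-1$ fall into one of the following three cases: (i) $\vec n_j=(0,0,\pm1)$ and $\vec n_j'=(\cos\varphi_j',\sin\varphi_j',0)$ for all $j=1,\dots,N-1$; (ii) $\vec n_j=(\cos\varphi_j,\sin\varphi_j,0)$ and $\vec n_j'=(0,0,\pm1)$ for all $j=1,\dots,N-1$; (iii) $\vec n_j=(\cos\varphi_j,\sin\varphi_j,0)$ and $\vec n_j'=(\cos\varphi_j',\sin\varphi_j',0)$ for all $j=1,\dots,N-1$. (The signs $\pm$ may depend on $j$.) If $N$ is odd, only case (iii) can occur.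
   Context: $|G\rangle=\frac{1}{\sqrt2}(|0\cdots0\rangle+|1\cdots1\rangle)$ ($N$ qubits). $\vec\sigma=(\sigma_x,\sigma_y,\sigma_z)$ Pauli matrices. For $j=1,\dots,N$: $X_j=\vec n_j\cdot\vec\sigma$, $X_j'=\vec n_j'\cdot\vec\sigma$ with $\vec n_j=(\sin\alpha_j\cos\varphi_j,\sin\alpha_j\sin\varphi_j,\cos\alpha_j)$, $\vec n_j'=(\sin\alpha_j'\cos\varphi_j',\sin\alpha_j'\sin\varphi_j',\cos\alpha_j')$, $\alpha_j,\alpha_j'\in[0,\pi]$. $\mathbb A_0=\bigotimes_{j=1}^{N-1}X_j$, $\mathbb A_1=\bigotimes_{j=1}^{N-1}X_j'$, $\mathbb B_0=X_N$, $\mathbb B_1=X_N'$, and $\langle I^N_{CHSH}\rangle=\sum_{a,b\in\{0,1\}}(-1)^{ab}\langle G|\mathbb A_a\otimes\mathbb B_b|G\rangle$. (ND): $(\prod_{j=1}^{N-1}\cos\alpha_j)^2+(\prod_{j=1}^{N-1}\sin\alpha_j)^2\neq0$, $(\prod_{j=1}^{N-1}\cos\alpha_j')^2+(\prod_{j=1}^{N-1}\sin\alpha_j')^2\neq0$, and if $N$ is odd, $\sin\alpha_N\neq0$ and $\sin\alpha_N'\neq0$. *)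

theory Defs
  imports Complex_Main
begin

text \<open>Single-qubit operators as 2x2 complex matrices indexed by bool
  (False = basis state 0, True = basis state 1).\<close>

type_synonym qop = "bool \<Rightarrow> bool \<Rightarrow> complex"

definition sigma_x :: qop where
  "sigma_x a b = (if a \<noteq> b then 1 else 0)"

definition sigma_y :: qop where
  "sigma_y a b = (if a = False \<and> b = True then - \<i> else if a = True \<and> b = False then \<i> else 0)"

definition sigma_z :: qop where
  "sigma_z a b = (if a = b then (if a then -1 else 1) else 0)"

definition bloch :: "real \<Rightarrow> real \<Rightarrow> real \<times> real \<times> real" where
  "bloch \<alpha> \<phi> = (sin \<alpha> * cos \<phi>, sin \<alpha> * sin \<phi>, cos \<alpha>)"

definition dot_sigma :: "real \<times> real \<times> real \<Rightarrow> qop" where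
  "dot_sigma n a b = complex_of_real (fst n) * sigma_x a b
                   + complex_of_real (fst (snd n)) * sigma_y a b
                   + complex_of_real (snd (snd n)) * sigma_z a b"

text \<open>Computational basis of N qubits: bit lists of length N; qubit j (1-based)
  is entry j-1.\<close>
definition basis :: "nat \<Rightarrow> bool list set" where
  "basis N = {xs. length xs = N}"

definition tensor :: "nat \<Rightarrow> (nat \<Rightarrow> qop) \<Rightarrow> bool list \<Rightarrow> bool list \<Rightarrow> complex" where
  "tensor N M xs ys = (\<Prod>j\<in>{1..N}. M j (xs ! (j - 1)) (ys ! (j - 1)))"

definition ghz :: "nat \<Rightarrow> bool list \<Rightarrow> complex" where
  "ghz N xs = (if xs = replicate N False \<or> xs = replicate N True
               then complex_of_real (1 / sqrt 2) else 0)"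

definition ghz_expect :: "nat \<Rightarrow> (nat \<Rightarrow> qop) \<Rightarrow> complex" where
  "ghz_expect N M = (\<Sum>xs\<in>basis N. \<Sum>ys\<in>basis N.
                       cnj (ghz N xs) * tensor N M xs ys * ghz N ys)"

text \<open>Operator for A_a \<otimes> B_b: qubits 1..N-1 get X_j (a=0) or X_j' (a=1),
  qubit N gets X_N (b=0) or X_N' (b=1).\<close>
definition setting_op :: "nat \<Rightarrow> (nat \<Rightarrow> qop) \<Rightarrow> (nat \<Rightarrow> qop) \<Rightarrow> nat \<Rightarrow> nat \<Rightarrow> nat \<Rightarrow> qop" where
  "setting_op N X X' a b j =
     (if j < N then (if a = 0 then X j else X' j) else (if b = 0 then X j else X' j))"

definition chsh_N :: "nat \<Rightarrow> (nat \<Rightarrow> qop) \<Rightarrow> (nat \<Rightarrow> qop) \<Rightarrow> complex" where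
  "chsh_N N X X' = (\<Sum>a\<in>{0,1::nat}. \<Sum>b\<in>{0,1::nat}.
      (-1) ^ (a * b) * ghz_expect N (setting_op N X X' a b))"

end

theory Submission
  imports Defs "HOL-Analysis.Euclidean_Space"
begin

(* With C, S the products of cos(alpha j), sin(alpha j) over the first N-1 qubits and P the sum of
   their azimuths, the GHZ correlation of Bloch-vector settings is the inner product of the Bloch
   vector of qubit N with u = (S cos P, -S sin P, C if N is even, else 0), and |u|^2 <= C^2 + S^2 <= 1.
   So the CHSH value is u0.(v0 + v1) + u1.(v0 - v1) with unit vectors v0, v1, and a sum-of-squares
   identity shows that the Tsirelson value +-2 sqrt 2 forces u0, u1 to be orthonormal.
   Now |u| = 1 gives C^2 + S^2 = 1, which for at least two factors means that all cos(alpha j) or all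
   sin(alpha j) vanish. Orthogonality excludes both settings being polar, and for odd N the last
   component of u is 0, so S^2 = 1 and both settings lie on the equator. *)

lemma dot_sigma_bloch:
  "dot_sigma (bloch a f) False False = complex_of_real (cos a)"
  "dot_sigma (bloch a f) True True = - complex_of_real (cos a)"
  "dot_sigma (bloch a f) False True = complex_of_real (sin a) * cis (- f)"
  "dot_sigma (bloch a f) True False = complex_of_real (sin a) * cis f"
  by (auto simp: dot_sigma_def bloch_def sigma_x_def sigma_y_def sigma_z_def complex_eq_iff)

lemma norm_bloch [simp]: "norm (bloch a f) = 1"
proof -
  have "(sin a * cos f)\<^sup>2 + (sin a * sin f)\<^sup>2 = (sin a)\<^sup>2"
    by (simp add: power_mult_distrib flip: distrib_left)
  then show ?thesis
    by (simp add: bloch_def norm_eq_1 flip: power2_eq_square) (use sin_cos_squared_add[of a] in linarith)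
qed

lemma bloch_cos_eq_0:
  assumes "0 \<le> a" "a \<le> pi" "cos a = 0"
  shows "bloch a f = (cos f, sin f, 0)"
proof -
  have "sin a \<ge> 0" using assms by (simp add: sin_ge_zero)
  moreover have "(sin a)\<^sup>2 = 1" using assms(3) sin_cos_squared_add[of a] by simp
  ultimately have "sin a = 1" by (simp add: power2_eq_1_iff)
  then show ?thesis using assms by (simp add: bloch_def)
qed

lemma bloch_sin_eq_0:
  assumes "sin a = 0"
  shows "bloch a f = (0, 0, 1) \<or> bloch a f = (0, 0, -1)"
proof -
  have "(cos a)\<^sup>2 = 1" using assms sin_cos_squared_add[of a] by simp
  then show ?thesis using assms by (auto simp: bloch_def power2_eq_1_iff)
qed

lemma prod_cis: "finite A \<Longrightarrow> (\<Prod>j\<in>A. cis (f j)) = cis (\<Sum>j\<in>A. f j)"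
  by (induct A rule: finite_induct) (auto simp: cis_mult)

lemma finite_basis: "finite (basis N)"
proof -
  have "basis N = {xs. set xs \<subseteq> UNIV \<and> length xs = N}" by (auto simp: basis_def)
  then show ?thesis using finite_lists_length_eq[of "UNIV::bool set" N] by simp
qed

lemma tensor_replicate: "tensor N M (replicate N b) (replicate N c) = (\<Prod>j\<in>{1..N}. M j b c)"
  unfolding tensor_def by (rule prod.cong) auto

lemma ghz_expect_eq_corners:
  assumes "N \<ge> 1"
  shows "ghz_expect N M = ((\<Prod>j\<in>{1..N}. M j False False) + (\<Prod>j\<in>{1..N}. M j False True)
     + (\<Prod>j\<in>{1..N}. M j True False) + (\<Prod>j\<in>{1..N}. M j True True)) / 2" (is "_ = ?R")
proof -
  let ?z = "replicate N False" and ?o = "replicate N True"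
  have ne: "?z \<noteq> ?o" using assms by (cases N) auto
  have sub: "{?z, ?o} \<subseteq> basis N" by (auto simp: basis_def)
  have amplitude: "cnj (complex_of_real (1 / sqrt 2)) * x * complex_of_real (1 / sqrt 2) = x / 2" for x
  proof -
    have "complex_of_real (1 / sqrt 2) * complex_of_real (1 / sqrt 2) = 1 / 2"
      by (simp flip: of_real_mult)
    then show ?thesis by (simp add: field_simps)
  qed
  have inner: "(\<Sum>ys\<in>basis N. cnj (ghz N xs) * tensor N M xs ys * ghz N ys)
      = (\<Sum>ys\<in>{?z, ?o}. cnj (ghz N xs) * tensor N M xs ys * ghz N ys)" for xs
    by (rule sum.mono_neutral_right[OF finite_basis sub]) (auto simp: ghz_def)
  have "ghz_expect N M
      = (\<Sum>xs\<in>basis N. \<Sum>ys\<in>{?z, ?o}. cnj (ghz N xs) * tensor N M xs ys * ghz N ys)"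
    unfolding ghz_expect_def inner ..
  also have "\<dots> = (\<Sum>xs\<in>{?z, ?o}. \<Sum>ys\<in>{?z, ?o}. cnj (ghz N xs) * tensor N M xs ys * ghz N ys)"
    by (rule sum.mono_neutral_right[OF finite_basis sub]) (auto simp: ghz_def)
  also have "\<dots> = ?R"
  proof -
    have "complex_of_real (sqrt 2) * complex_of_real (sqrt 2) = 2"
      by (simp flip: of_real_mult)
    then show ?thesis
      using ne by (simp add: ghz_def amplitude tensor_replicate add_divide_distrib)
  qed
  finally show ?thesis .
qed

lemma ghz_expect_cong:
  assumes "N \<ge> 1" "\<And>j. j \<in> {1..N} \<Longrightarrow> M j = M' j"
  shows "ghz_expect N M = ghz_expect N M'"
proof -
  have "(\<Prod>j\<in>{1..N}. M j b c) = (\<Prod>j\<in>{1..N}. M' j b c)" for b c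
    using assms(2) by (intro prod.cong) auto
  then show ?thesis unfolding ghz_expect_eq_corners[OF assms(1)] by simp
qed

lemma ghz_expect_bloch:
  assumes "N \<ge> 1"
  shows "ghz_expect N (\<lambda>j. dot_sigma (bloch (A j) (F j))) =
    complex_of_real ((if even N then (\<Prod>j\<in>{1..N}. cos (A j)) else 0)
      + (\<Prod>j\<in>{1..N}. sin (A j)) * cos (\<Sum>j\<in>{1..N}. F j))"
proof -
  have "(\<Prod>j\<in>{1..N}. - complex_of_real (cos (A j)))
      = (-1) ^ N * complex_of_real (\<Prod>j\<in>{1..N}. cos (A j))"
    by (simp add: prod_uminus)
  moreover have "(\<Prod>j\<in>{1..N}. complex_of_real (sin (A j)) * cis (- F j))
      = complex_of_real (\<Prod>j\<in>{1..N}. sin (A j)) * cis (- (\<Sum>j\<in>{1..N}. F j))"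
    by (simp add: prod.distrib prod_cis sum_negf)
  moreover have "(\<Prod>j\<in>{1..N}. complex_of_real (sin (A j)) * cis (F j))
      = complex_of_real (\<Prod>j\<in>{1..N}. sin (A j)) * cis (\<Sum>j\<in>{1..N}. F j)"
    by (simp add: prod.distrib prod_cis)
  ultimately show ?thesis
    unfolding ghz_expect_eq_corners[OF assms] dot_sigma_bloch
    by (auto simp: complex_eq_iff simp flip: of_real_prod)
qed

definition collective_vector :: "nat \<Rightarrow> (nat \<Rightarrow> real) \<Rightarrow> (nat \<Rightarrow> real) \<Rightarrow> real \<times> real \<times> real" where
  "collective_vector N \<alpha> \<phi> =
     ((\<Prod>j\<in>{1..N-1}. sin (\<alpha> j)) * cos (\<Sum>j\<in>{1..N-1}. \<phi> j),
      - (\<Prod>j\<in>{1..N-1}. sin (\<alpha> j)) * sin (\<Sum>j\<in>{1..N-1}. \<phi> j),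
      if even N then \<Prod>j\<in>{1..N-1}. cos (\<alpha> j) else 0)"

lemma collective_vector_cong:
  assumes "\<And>j. j \<in> {1..N-1} \<Longrightarrow> \<alpha> j = \<beta> j \<and> \<phi> j = \<psi> j"
  shows "collective_vector N \<alpha> \<phi> = collective_vector N \<beta> \<psi>"
proof -
  have "(\<Prod>j\<in>{1..N-1}. sin (\<alpha> j)) = (\<Prod>j\<in>{1..N-1}. sin (\<beta> j))"
       "(\<Prod>j\<in>{1..N-1}. cos (\<alpha> j)) = (\<Prod>j\<in>{1..N-1}. cos (\<beta> j))"
       "(\<Sum>j\<in>{1..N-1}. \<phi> j) = (\<Sum>j\<in>{1..N-1}. \<psi> j)"
    using assms by (auto intro: prod.cong sum.cong)
  then show ?thesis by (simp add: collective_vector_def)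
qed

lemma ghz_expect_bloch_eq_inner:
  assumes "N \<ge> 1"
  shows "ghz_expect N (\<lambda>j. dot_sigma (bloch (\<alpha> j) (\<phi> j)))
    = complex_of_real (inner (collective_vector N \<alpha> \<phi>) (bloch (\<alpha> N) (\<phi> N)))"
proof -
  have split: "{1..N} = insert N {1..N-1}" "N \<notin> {1..N-1}" using assms by auto
  show ?thesis
    unfolding ghz_expect_bloch[OF assms] split(1) prod.insert[OF finite_atLeastAtMost split(2)]
      sum.insert[OF finite_atLeastAtMost split(2)]
    by (simp add: collective_vector_def bloch_def cos_add algebra_simps)
qed

lemma ghz_expect_setting_op_bloch:
  assumes "N \<ge> 1"
  shows "ghz_expect N (setting_op N (\<lambda>j. dot_sigma (bloch (\<alpha> j) (\<phi> j)))
                                  (\<lambda>j. dot_sigma (bloch (\<alpha>' j) (\<phi>' j))) a b)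
    = complex_of_real (inner (if a = 0 then collective_vector N \<alpha> \<phi> else collective_vector N \<alpha>' \<phi>')
                             (if b = 0 then bloch (\<alpha> N) (\<phi> N) else bloch (\<alpha>' N) (\<phi>' N)))"
proof -
  define A where "A j = (if j < N then (if a = 0 then \<alpha> j else \<alpha>' j) else (if b = 0 then \<alpha> j else \<alpha>' j))" for j
  define F where "F j = (if j < N then (if a = 0 then \<phi> j else \<phi>' j) else (if b = 0 then \<phi> j else \<phi>' j))" for j
  have "ghz_expect N (setting_op N (\<lambda>j. dot_sigma (bloch (\<alpha> j) (\<phi> j)))
                                  (\<lambda>j. dot_sigma (bloch (\<alpha>' j) (\<phi>' j))) a b)
      = ghz_expect N (\<lambda>j. dot_sigma (bloch (A j) (F j)))"
    by (rule ghz_expect_cong[OF assms]) (auto simp: setting_op_def A_def F_def)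
  also have "\<dots> = complex_of_real (inner (collective_vector N A F) (bloch (A N) (F N)))"
    by (rule ghz_expect_bloch_eq_inner[OF assms])
  also have "collective_vector N A F
      = (if a = 0 then collective_vector N \<alpha> \<phi> else collective_vector N \<alpha>' \<phi>')"
    by (auto intro!: collective_vector_cong simp: A_def F_def)
  finally show ?thesis by (simp add: A_def F_def)
qed

lemma chsh_N_bloch_eq_inner:
  assumes "N \<ge> 1"
  shows "chsh_N N (\<lambda>j. dot_sigma (bloch (\<alpha> j) (\<phi> j))) (\<lambda>j. dot_sigma (bloch (\<alpha>' j) (\<phi>' j)))
    = complex_of_real
        (inner (collective_vector N \<alpha> \<phi>) (bloch (\<alpha> N) (\<phi> N) + bloch (\<alpha>' N) (\<phi>' N))
       + inner (collective_vector N \<alpha>' \<phi>') (bloch (\<alpha> N) (\<phi> N) - bloch (\<alpha>' N) (\<phi>' N)))"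
  by (simp add: chsh_N_def ghz_expect_setting_op_bloch[OF assms] inner_add_right inner_diff_right)

lemma chsh_sum_of_squares:
  fixes u0 u1 v0 v1 :: "'a::real_inner"
  assumes "norm v0 = 1" "norm v1 = 1" "t * t = 1"
  shows "(norm (sqrt 2 *\<^sub>R u0 - t *\<^sub>R (v0 + v1)))\<^sup>2 + (norm (sqrt 2 *\<^sub>R u1 - t *\<^sub>R (v0 - v1)))\<^sup>2
    = 2 * (norm u0)\<^sup>2 + 2 * (norm u1)\<^sup>2 + 4
      - 2 * sqrt 2 * t * (inner u0 (v0 + v1) + inner u1 (v0 - v1))"
proof -
  have "inner v0 v0 = 1" "inner v1 v1 = 1"
    using assms(1,2) by (simp_all add: norm_eq_1)
  moreover have "sqrt 2 * sqrt 2 = (2::real)" by simp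
  ultimately show ?thesis
    using assms(3)
    by (simp add: power2_norm_eq_inner inner_commute algebra_simps)
qed

lemma chsh_tsirelson_saturation:
  fixes u0 u1 v0 v1 :: "'a::real_inner"
  assumes v: "norm v0 = 1" "norm v1 = 1" and u: "norm u0 \<le> 1" "norm u1 \<le> 1"
    and chsh: "inner u0 (v0 + v1) + inner u1 (v0 - v1) \<in> {2 * sqrt 2, - 2 * sqrt 2}"
  shows "norm u0 = 1 \<and> norm u1 = 1 \<and> inner u0 u1 = 0"
proof -
  have "inner u0 (v0 + v1) + inner u1 (v0 - v1) = 2 * sqrt 2 * 1
      \<or> inner u0 (v0 + v1) + inner u1 (v0 - v1) = 2 * sqrt 2 * (-1)"
    using chsh by auto
  then obtain t :: real where "t = 1 \<or> t = -1"
    and R: "inner u0 (v0 + v1) + inner u1 (v0 - v1) = 2 * sqrt 2 * t"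
    by blast
  then have t: "t * t = 1" by auto
  let ?d0 = "sqrt 2 *\<^sub>R u0 - t *\<^sub>R (v0 + v1)" and ?d1 = "sqrt 2 *\<^sub>R u1 - t *\<^sub>R (v0 - v1)"
  have "(norm ?d0)\<^sup>2 + (norm ?d1)\<^sup>2 = 2 * (norm u0)\<^sup>2 + 2 * (norm u1)\<^sup>2 - 4"
    using chsh_sum_of_squares[OF v t, of u0 u1] t unfolding R by (simp add: algebra_simps)
  moreover have "(norm u0)\<^sup>2 \<le> 1" "(norm u1)\<^sup>2 \<le> 1"
    using u by (simp_all add: power_le_one)
  moreover have "a = 0 \<and> b = 0 \<and> c = 1 \<and> d = 1"
    if "a + b = 2 * c + 2 * d - 4" "0 \<le> a" "0 \<le> b" "c \<le> 1" "d \<le> 1" for a b c d :: real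
    using that by argo
  ultimately have "(norm ?d0)\<^sup>2 = 0 \<and> (norm ?d1)\<^sup>2 = 0 \<and> (norm u0)\<^sup>2 = 1 \<and> (norm u1)\<^sup>2 = 1"
    using zero_le_power2[of "norm ?d0"] zero_le_power2[of "norm ?d1"] by blast
  then have aligned: "sqrt 2 *\<^sub>R u0 = t *\<^sub>R (v0 + v1)" "sqrt 2 *\<^sub>R u1 = t *\<^sub>R (v0 - v1)"
    and "norm u0 = 1" "norm u1 = 1"
    by (simp_all add: power2_norm_eq_inner norm_eq_1)
  have "2 * inner u0 u1 = inner (sqrt 2 *\<^sub>R u0) (sqrt 2 *\<^sub>R u1)"
    by simp
  also have "\<dots> = (t * t) * (inner v0 v0 - inner v1 v1)"
    unfolding aligned by (simp add: inner_commute algebra_simps)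
  also have "\<dots> = 0"
    using v by (simp add: norm_eq_1)
  finally show ?thesis using \<open>norm u0 = 1\<close> \<open>norm u1 = 1\<close> by simp
qed

lemma prod_eq_1_imp_factor_eq_1:
  fixes f :: "'a \<Rightarrow> real"
  assumes "finite J" "\<And>j. j \<in> J \<Longrightarrow> 0 \<le> f j \<and> f j \<le> 1" "prod f J = 1" "i \<in> J"
  shows "f i = 1"
proof -
  have "prod f J = f i * prod f (J - {i})" using assms by (simp add: prod.remove)
  moreover have "0 \<le> prod f (J - {i})" "prod f (J - {i}) \<le> 1"
    using assms(2) by (auto intro: prod_nonneg prod_le_1)
  moreover have "0 \<le> f i" "f i \<le> 1" using assms by auto
  ultimately show ?thesis using assms(3) mult_left_le[of "prod f (J - {i})" "f i"] by linarith
qed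

lemma prod_add_prod_complement_le_1:
  fixes f :: "'a \<Rightarrow> real"
  assumes "finite J" "J \<noteq> {}" "\<And>j. j \<in> J \<Longrightarrow> 0 \<le> f j \<and> f j \<le> 1"
  shows "prod f J + (\<Prod>j\<in>J. 1 - f j) \<le> 1"
  using assms
proof (induction J rule: finite_ne_induct)
  case (singleton i)
  then show ?case by simp
next
  case (insert i J)
  define P where "P = prod f J"
  define Q where "Q = (\<Prod>j\<in>J. 1 - f j)"
  have "0 \<le> P" "0 \<le> Q" "P + Q \<le> 1"
    using insert by (auto simp: P_def Q_def intro: prod_nonneg)
  moreover have "0 \<le> f i" "f i \<le> 1" using insert by auto
  ultimately have "f i * P + (1 - f i) * Q \<le> f i + (1 - f i)"
    by (intro add_mono mult_left_le) auto
  then show ?case using insert by (simp add: P_def Q_def)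
qed

lemma prod_add_prod_complement_eq_1:
  fixes f :: "'a \<Rightarrow> real"
  assumes J: "finite J" "card J \<ge> 2" and f: "\<And>j. j \<in> J \<Longrightarrow> 0 \<le> f j \<and> f j \<le> 1"
    and eq: "prod f J + (\<Prod>j\<in>J. 1 - f j) = 1"
  shows "(\<forall>j\<in>J. f j = 0) \<or> (\<forall>j\<in>J. f j = 1)"
proof -
  obtain i where i: "i \<in> J" using J by fastforce
  define J' where "J' = J - {i}"
  have "0 < card J'" using J i by (simp add: J'_def)
  then have J': "finite J'" "J' \<noteq> {}" by (simp_all add: card_gt_0_iff)
  have fJ': "0 \<le> f j \<and> f j \<le> 1" "0 \<le> 1 - f j \<and> 1 - f j \<le> 1" if "j \<in> J'" for j
    using f that by (auto simp: J'_def)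
  define P where "P = prod f J'"
  define Q where "Q = (\<Prod>j\<in>J'. 1 - f j)"
  have "P + Q \<le> 1" "0 \<le> P" "0 \<le> Q"
    using prod_add_prod_complement_le_1[of J' f] J' fJ' by (auto simp: P_def Q_def intro: prod_nonneg)
  moreover have "0 \<le> f i" "f i \<le> 1" using f i by auto
  ultimately have nonneg: "0 \<le> f i * (1 - P)" "0 \<le> (1 - f i) * (1 - Q)" by simp_all
  have "f i * P + (1 - f i) * Q = 1"
    using eq J i by (simp add: P_def Q_def J'_def prod.remove)
  then have "f i * (1 - P) + (1 - f i) * (1 - Q) = 0" by (simp add: algebra_simps)
  then have "f i * (1 - P) = 0" "(1 - f i) * (1 - Q) = 0" using nonneg by linarith+
  show ?thesis
  proof (cases "f i = 1")
    case True
    then have "P = 1" using \<open>f i * (1 - P) = 0\<close> by simp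
    then have "\<forall>j\<in>J'. f j = 1"
      using prod_eq_1_imp_factor_eq_1[of J' f] J'(1) fJ'(1) unfolding P_def by blast
    then show ?thesis using True by (auto simp: J'_def)
  next
    case False
    then have "Q = 1" using \<open>(1 - f i) * (1 - Q) = 0\<close> by simp
    then have "\<forall>j\<in>J'. 1 - f j = 1"
      using prod_eq_1_imp_factor_eq_1[of J' "\<lambda>j. 1 - f j"] J'(1) fJ'(2) unfolding Q_def by blast
    then have "\<forall>j\<in>J'. f j = 0" by simp
    then have "P = 0" using J' by (auto simp: P_def)
    then have "f i = 0" using \<open>f i * (1 - P) = 0\<close> by simp
    then show ?thesis using \<open>\<forall>j\<in>J'. f j = 0\<close> by (auto simp: J'_def)
  qed
qed

lemma prod_cos_sq_add_prod_sin_sq_le_1: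
  fixes a :: "'a \<Rightarrow> real"
  assumes "finite J" "J \<noteq> {}"
  shows "(\<Prod>j\<in>J. cos (a j))\<^sup>2 + (\<Prod>j\<in>J. sin (a j))\<^sup>2 \<le> 1"
  using prod_add_prod_complement_le_1[OF assms, of "\<lambda>j. (cos (a j))\<^sup>2"]
  by (simp add: prod_power_distrib abs_square_le_1 flip: sin_squared_eq)

lemma prod_cos_sq_add_prod_sin_sq_eq_1:
  fixes a :: "'a \<Rightarrow> real"
  assumes "finite J" "card J \<ge> 2"
    and "(\<Prod>j\<in>J. cos (a j))\<^sup>2 + (\<Prod>j\<in>J. sin (a j))\<^sup>2 = 1"
  shows "(\<forall>j\<in>J. cos (a j) = 0) \<or> (\<forall>j\<in>J. sin (a j) = 0)"
proof -
  have "(\<forall>j\<in>J. (cos (a j))\<^sup>2 = 0) \<or> (\<forall>j\<in>J. (cos (a j))\<^sup>2 = 1)"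
    using prod_add_prod_complement_eq_1[of J "\<lambda>j. (cos (a j))\<^sup>2"] assms
    by (simp add: prod_power_distrib abs_square_le_1 flip: sin_squared_eq)
  moreover have "sin x = 0" if "(cos x)\<^sup>2 = 1" for x :: real
    using that by (simp add: cos_squared_eq)
  ultimately show ?thesis by auto
qed

lemma norm_collective_vector_sq:
  "(norm (collective_vector N \<alpha> \<phi>))\<^sup>2
     = (if even N then (\<Prod>j\<in>{1..N-1}. cos (\<alpha> j))\<^sup>2 else 0) + (\<Prod>j\<in>{1..N-1}. sin (\<alpha> j))\<^sup>2"
proof -
  have "(S * cos P)\<^sup>2 + (S * sin P)\<^sup>2 = S\<^sup>2" for S P :: real
    by (simp add: power_mult_distrib flip: distrib_left)
  then show ?thesis
    by (simp add: power2_norm_eq_inner collective_vector_def flip: power2_eq_square)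
qed

lemma norm_collective_vector_le_1:
  assumes "N \<ge> 2"
  shows "norm (collective_vector N \<alpha> \<phi>) \<le> 1"
proof -
  let ?C = "\<Prod>j\<in>{1..N-1}. cos (\<alpha> j)" and ?S = "\<Prod>j\<in>{1..N-1}. sin (\<alpha> j)"
  have "?C\<^sup>2 + ?S\<^sup>2 \<le> 1"
    using prod_cos_sq_add_prod_sin_sq_le_1[of "{1..N-1}" \<alpha>] assms by simp
  moreover have "?S\<^sup>2 \<le> 1"
    using calculation zero_le_power2[of ?C] by linarith
  ultimately have "(norm (collective_vector N \<alpha> \<phi>))\<^sup>2 \<le> 1"
    unfolding norm_collective_vector_sq by simp
  then show ?thesis by (simp add: power_le_one_iff)
qed

lemma collective_vector_unit_cases:
  assumes "N \<ge> 3" "norm (collective_vector N \<alpha> \<phi>) = 1"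
  shows "(\<forall>j\<in>{1..N-1}. cos (\<alpha> j) = 0) \<or> (even N \<and> (\<forall>j\<in>{1..N-1}. sin (\<alpha> j) = 0))"
proof -
  let ?C = "\<Prod>j\<in>{1..N-1}. cos (\<alpha> j)" and ?S = "\<Prod>j\<in>{1..N-1}. sin (\<alpha> j)"
  have unit: "(if even N then ?C\<^sup>2 else 0) + ?S\<^sup>2 = 1"
    using assms(2) norm_collective_vector_sq[of N \<alpha> \<phi>] by simp
  moreover have "?C\<^sup>2 + ?S\<^sup>2 \<le> 1"
    using prod_cos_sq_add_prod_sin_sq_le_1[of "{1..N-1}" \<alpha>] assms(1) by simp
  moreover have "(if even N then ?C\<^sup>2 else 0) \<le> ?C\<^sup>2" by simp
  ultimately have "?C\<^sup>2 + ?S\<^sup>2 = 1" by linarith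
  then have "(\<forall>j\<in>{1..N-1}. cos (\<alpha> j) = 0) \<or> (\<forall>j\<in>{1..N-1}. sin (\<alpha> j) = 0)"
    using assms(1) by (intro prod_cos_sq_add_prod_sin_sq_eq_1) auto
  moreover have "even N" if "\<forall>j\<in>{1..N-1}. sin (\<alpha> j) = 0"
  proof -
    have "?S = 0" using that assms(1) by (auto intro!: bexI[of _ 1])
    then show ?thesis using unit[unfolded \<open>?S = 0\<close>] by (simp split: if_splits)
  qed
  ultimately show ?thesis by blast
qed

lemma inner_polar_collective_vectors_neq_0:
  assumes "N \<ge> 2" "\<forall>j\<in>{1..N-1}. sin (\<alpha> j) = 0" "\<forall>j\<in>{1..N-1}. sin (\<alpha>' j) = 0"
    and "norm (collective_vector N \<alpha> \<phi>) = 1" "norm (collective_vector N \<alpha>' \<phi>') = 1"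
  shows "inner (collective_vector N \<alpha> \<phi>) (collective_vector N \<alpha>' \<phi>') \<noteq> 0"
proof -
  have polar: "collective_vector N \<beta> \<psi> = (0, 0, if even N then \<Prod>j\<in>{1..N-1}. cos (\<beta> j) else 0)"
    if "\<forall>j\<in>{1..N-1}. sin (\<beta> j) = 0" for \<beta> \<psi>
  proof -
    have "(\<Prod>j\<in>{1..N-1}. sin (\<beta> j)) = 0" using that assms(1) by (auto intro!: bexI[of _ 1])
    then show ?thesis by (simp add: collective_vector_def)
  qed
  have "inner (0, 0, p) (0, 0, q) \<noteq> 0" if "norm (0, 0, p) = 1" "norm (0, 0, q) = 1" for p q :: real
    using that by auto
  then show ?thesis
    using assms(4,5) unfolding polar[OF assms(2)] polar[OF assms(3)] by blast
qed

theorem theorem2: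
  fixes N :: nat and \<alpha> \<phi> \<alpha>' \<phi>' :: "nat \<Rightarrow> real"
  assumes N3: "N \<ge> 3"
    and ang: "\<forall>j\<in>{1..N}. 0 \<le> \<alpha> j \<and> \<alpha> j \<le> pi \<and> 0 \<le> \<alpha>' j \<and> \<alpha>' j \<le> pi"
    and ND1: "(\<Prod>j\<in>{1..N-1}. cos (\<alpha> j))\<^sup>2 + (\<Prod>j\<in>{1..N-1}. sin (\<alpha> j))\<^sup>2 \<noteq> 0"
    and ND2: "(\<Prod>j\<in>{1..N-1}. cos (\<alpha>' j))\<^sup>2 + (\<Prod>j\<in>{1..N-1}. sin (\<alpha>' j))\<^sup>2 \<noteq> 0"
    and ND3: "odd N \<longrightarrow> sin (\<alpha> N) \<noteq> 0 \<and> sin (\<alpha>' N) \<noteq> 0"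
    and val: "chsh_N N (\<lambda>j. dot_sigma (bloch (\<alpha> j) (\<phi> j))) (\<lambda>j. dot_sigma (bloch (\<alpha>' j) (\<phi>' j)))
                = complex_of_real (2 * sqrt 2)
           \<or> chsh_N N (\<lambda>j. dot_sigma (bloch (\<alpha> j) (\<phi> j))) (\<lambda>j. dot_sigma (bloch (\<alpha>' j) (\<phi>' j)))
                = complex_of_real (- 2 * sqrt 2)"
  shows "((\<forall>j\<in>{1..N-1}. (bloch (\<alpha> j) (\<phi> j) = (0, 0, 1) \<or> bloch (\<alpha> j) (\<phi> j) = (0, 0, -1))
                         \<and> bloch (\<alpha>' j) (\<phi>' j) = (cos (\<phi>' j), sin (\<phi>' j), 0))
        \<or> (\<forall>j\<in>{1..N-1}. bloch (\<alpha> j) (\<phi> j) = (cos (\<phi> j), sin (\<phi> j), 0)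
                         \<and> (bloch (\<alpha>' j) (\<phi>' j) = (0, 0, 1) \<or> bloch (\<alpha>' j) (\<phi>' j) = (0, 0, -1)))
        \<or> (\<forall>j\<in>{1..N-1}. bloch (\<alpha> j) (\<phi> j) = (cos (\<phi> j), sin (\<phi> j), 0)
                         \<and> bloch (\<alpha>' j) (\<phi>' j) = (cos (\<phi>' j), sin (\<phi>' j), 0)))
       \<and> (odd N \<longrightarrow>
           (\<forall>j\<in>{1..N-1}. bloch (\<alpha> j) (\<phi> j) = (cos (\<phi> j), sin (\<phi> j), 0)
                         \<and> bloch (\<alpha>' j) (\<phi>' j) = (cos (\<phi>' j), sin (\<phi>' j), 0)))"
proof -
  have N1: "N \<ge> 1" using N3 by simp
  let ?u0 = "collective_vector N \<alpha> \<phi>" and ?u1 = "collective_vector N \<alpha>' \<phi>'"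
  let ?v0 = "bloch (\<alpha> N) (\<phi> N)" and ?v1 = "bloch (\<alpha>' N) (\<phi>' N)"
  have "inner ?u0 (?v0 + ?v1) + inner ?u1 (?v0 - ?v1) \<in> {2 * sqrt 2, - 2 * sqrt 2}"
    using val unfolding chsh_N_bloch_eq_inner[OF N1] of_real_eq_iff by simp
  then have u: "norm ?u0 = 1" "norm ?u1 = 1" "inner ?u0 ?u1 = 0"
    using chsh_tsirelson_saturation[of ?v0 ?v1 ?u0 ?u1] N3 by (simp_all add: norm_collective_vector_le_1)
  have cases0: "(\<forall>j\<in>{1..N-1}. cos (\<alpha> j) = 0) \<or> (even N \<and> (\<forall>j\<in>{1..N-1}. sin (\<alpha> j) = 0))"
    using collective_vector_unit_cases[OF N3 u(1)] .
  have cases1: "(\<forall>j\<in>{1..N-1}. cos (\<alpha>' j) = 0) \<or> (even N \<and> (\<forall>j\<in>{1..N-1}. sin (\<alpha>' j) = 0))"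
    using collective_vector_unit_cases[OF N3 u(2)] .
  have not_both_polar: "\<not> ((\<forall>j\<in>{1..N-1}. sin (\<alpha> j) = 0) \<and> (\<forall>j\<in>{1..N-1}. sin (\<alpha>' j) = 0))"
    using inner_polar_collective_vectors_neq_0[of N \<alpha> \<alpha>' \<phi> \<phi>'] u N3 by auto
  have equator: "\<forall>j\<in>{1..N-1}. bloch (a j) (f j) = (cos (f j), sin (f j), 0)"
    if "\<forall>j\<in>{1..N}. 0 \<le> a j \<and> a j \<le> pi" "\<forall>j\<in>{1..N-1}. cos (a j) = 0" for a f
    using that bloch_cos_eq_0 by auto
  have pole: "\<forall>j\<in>{1..N-1}. bloch (a j) (f j) = (0, 0, 1) \<or> bloch (a j) (f j) = (0, 0, -1)"
    if "\<forall>j\<in>{1..N-1}. sin (a j) = 0" for a f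
    using that bloch_sin_eq_0 by blast
  have "\<forall>j\<in>{1..N}. 0 \<le> \<alpha> j \<and> \<alpha> j \<le> pi" "\<forall>j\<in>{1..N}. 0 \<le> \<alpha>' j \<and> \<alpha>' j \<le> pi"
    using ang by auto
  note equator = equator[OF this(1), of \<phi>] equator[OF this(2), of \<phi>']
  show ?thesis
    using cases0 cases1 not_both_polar equator pole[of \<alpha> \<phi>] pole[of \<alpha>' \<phi>'] by blast
qed


end
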